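(* Let $\Sigma$ be a finite set, $k>2$ an integer, and $n\ge 1$. For every sequence of sets $X_1,\ldots,X_n\subseteq\Sigma$, each of size $k$, with $|\Sigma|<(k-2)\log_2(n/3)$, there exist indices $1\le i<j\le n$ and sets $X_i',\ldots,X_j'$ such that for each $\ell\in\{i,\ldots,j\}$, $X_\ell'\subseteq X_\ell$ and $|X_\ell'|\ge 2$, and for each $a\in\Sigma$ the number of sets among $X_i',\ldots,X_j'$ that contain $a$ is even. *)

theory Defs
  imports Complex_Main
begin

end

theory Submission
  imports Defs
begin

text \<open>Suppose no interval \<open>{i..j}\<close> admits an even subfamily. Then in every interval some \<open>X l\<close> shares
  at most two elements with the other sets of the interval. Otherwise every \<open>X l\<close> shares at least
  three, and one can keep only shared elements and then delete each element of odd multiplicity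
  (which has multiplicity at least three) from a single set; by a capacitated form of Hall's theorem
  this is possible while each set loses at most \<open>card (shared part) - 2\<close> elements, since a set with
  \<open>s \<ge> 3\<close> shared elements has \<open>s \<le> 3 (s - 2)\<close>. So that \<open>X l\<close> contributes \<open>k - 2\<close> elements not
  covered by the rest of the interval; recursing into the longer side of \<open>l\<close> shows that an interval
  of length \<open>2^t\<close> covers at least \<open>(k - 2) t\<close> elements, contradicting the bound on \<open>card \<Sigma>\<close>.\<close>

definition Hall_condition :: "('e \<Rightarrow> 'x set) \<Rightarrow> 'e set \<Rightarrow> bool" where
  "Hall_condition A D \<longleftrightarrow> (\<forall>S\<subseteq>D. card S \<le> card (\<Union>(A ` S)))"

lemma Hall_condition_Diff_critical:
  assumes "finite D" "\<forall>e\<in>D. finite (A e)" "Hall_condition A D"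
    and "S \<subseteq> D" "card (\<Union>(A ` S)) = card S"
  shows "Hall_condition (\<lambda>e. A e - \<Union>(A ` S)) (D - S)"
  unfolding Hall_condition_def
proof (intro allI impI)
  fix T assume T: "T \<subseteq> D - S"
  have fin_TS: "finite T" "finite S"
    using T assms(1,4) by (auto intro: finite_subset)
  then have fin: "finite (\<Union>(A ` S))" "finite (\<Union>(A ` (T \<union> S)))"
    using T assms(2,4) by auto
  have "card T + card S = card (T \<union> S)"
    using T fin_TS by (intro card_Un_disjoint[symmetric]) auto
  also have "\<dots> \<le> card (\<Union>(A ` (T \<union> S)))"
    using T assms(3,4) unfolding Hall_condition_def by (meson Diff_subset le_sup_iff order_trans)
  also have "\<dots> = card (\<Union>(A ` (T \<union> S)) - \<Union>(A ` S)) + card (\<Union>(A ` S))"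
    using fin by (simp add: card_Diff_subset card_mono)
  finally show "card T \<le> card (\<Union>e\<in>T. A e - \<Union>(A ` S))"
    using assms(5) by (simp add: Un_Diff)
qed

lemma Hall_condition_Diff_elem:
  assumes "\<forall>S\<subseteq>D. S \<noteq> {} \<longrightarrow> card S < card (\<Union>(A ` S))"
  shows "Hall_condition (\<lambda>e. A e - {x}) D"
  unfolding Hall_condition_def
proof (intro allI impI)
  fix S assume S: "S \<subseteq> D"
  show "card S \<le> card (\<Union>e\<in>S. A e - {x})"
  proof (cases "S = {}")
    case False
    have "card S < card (\<Union>(A ` S))"
      using assms S False by blast
    moreover have "card (\<Union>(A ` S)) - card {x} \<le> card (\<Union>(A ` S) - {x})"
      by (rule diff_card_le_card_Diff) simp
    moreover have "(\<Union>e\<in>S. A e - {x}) = \<Union>(A ` S) - {x}" by blast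
    ultimately show ?thesis by simp
  qed simp
qed

theorem Hall_marriage:
  assumes "finite D" "\<forall>e\<in>D. finite (A e)" "Hall_condition A D"
  shows "\<exists>r. (\<forall>e\<in>D. r e \<in> A e) \<and> inj_on r D"
  using assms
proof (induction "card D" arbitrary: D A rule: less_induct)
  case less
  have IH: "\<exists>r. (\<forall>e\<in>D'. r e \<in> A' e) \<and> inj_on r D'"
    if "D' \<subset> D" "\<forall>e\<in>D'. finite (A' e)" "Hall_condition A' D'" for D' and A' :: "_ \<Rightarrow> 'b set"
  proof (rule less.hyps)
    show "card D' < card D" using that(1) less.prems(1) by (rule psubset_card_mono[rotated])
    show "finite D'" using that(1) less.prems(1) by (auto intro: finite_subset)
  qed (fact that)+
  show ?case
  proof (cases "\<exists>S. S \<subseteq> D \<and> S \<noteq> {} \<and> S \<noteq> D \<and> card (\<Union>(A ` S)) = card S")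
    case True
    then obtain S where S: "S \<subseteq> D" "S \<noteq> {}" "S \<noteq> D" "card (\<Union>(A ` S)) = card S" by blast
    have "Hall_condition A S"
      using less.prems(3) S(1) unfolding Hall_condition_def by auto
    moreover have "S \<subset> D" "\<forall>e\<in>S. finite (A e)" using S(1,3) less.prems(2) by auto
    ultimately obtain r1 where r1: "\<forall>e\<in>S. r1 e \<in> A e" "inj_on r1 S"
      using IH[of S A] by blast
    have "Hall_condition (\<lambda>e. A e - \<Union>(A ` S)) (D - S)"
      using less.prems S(1,4) by (rule Hall_condition_Diff_critical)
    moreover have "D - S \<subset> D" using S(1,2) by blast
    moreover have "\<forall>e\<in>D - S. finite (A e - \<Union>(A ` S))" using less.prems(2) by simp
    ultimately obtain r2 where r2: "\<forall>e\<in>D - S. r2 e \<in> A e - \<Union>(A ` S)" "inj_on r2 (D - S)"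
      using IH[of "D - S" "\<lambda>e. A e - \<Union>(A ` S)"] by blast
    define r where "r e = (if e \<in> S then r1 e else r2 e)" for e
    have "inj_on r (S \<union> (D - S))"
      unfolding inj_on_Un
    proof (intro conjI)
      show "inj_on r S" using r1(2) by (simp add: r_def inj_on_def)
      show "inj_on r (D - S)" using r2(2) by (simp add: r_def inj_on_def)
      show "r ` (S - (D - S)) \<inter> r ` (D - S - S) = {}"
        using r1(1) r2(1) by (auto simp: r_def)
    qed
    moreover have "\<forall>e\<in>D. r e \<in> A e"
      using r1(1) r2(1) by (simp add: r_def)
    moreover have "S \<union> (D - S) = D" using S(1) by blast
    ultimately show ?thesis by auto
  next
    case False
    show ?thesis
    proof (cases "D = {}")
      case nonempty: False
      then obtain e0 where e0: "e0 \<in> D" by blast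
      then have "card {e0} \<le> card (\<Union>(A ` {e0}))"
        using less.prems(3) unfolding Hall_condition_def by blast
      then obtain x where x: "x \<in> A e0" by fastforce
      have "\<forall>S\<subseteq>D - {e0}. S \<noteq> {} \<longrightarrow> card S < card (\<Union>(A ` S))"
      proof (intro allI impI)
        fix S assume S: "S \<subseteq> D - {e0}" "S \<noteq> {}"
        then have "card S \<le> card (\<Union>(A ` S))"
          using less.prems(3) unfolding Hall_condition_def by blast
        moreover have "card (\<Union>(A ` S)) \<noteq> card S"
          using False S e0 by blast
        ultimately show "card S < card (\<Union>(A ` S))" by linarith
      qed
      then have "Hall_condition (\<lambda>e. A e - {x}) (D - {e0})"
        by (rule Hall_condition_Diff_elem)
      moreover have "D - {e0} \<subset> D" using e0 by blast
      moreover have "\<forall>e\<in>D - {e0}. finite (A e - {x})" using less.prems(2) by simp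
      ultimately obtain r where r: "\<forall>e\<in>D - {e0}. r e \<in> A e - {x}" "inj_on r (D - {e0})"
        using IH[of "D - {e0}" "\<lambda>e. A e - {x}"] by blast
      have "inj_on (r(e0 := x)) (insert e0 (D - {e0}))"
        using r by (auto simp: inj_on_def)
      moreover have "\<forall>e\<in>D. (r(e0 := x)) e \<in> A e"
        using r(1) x by simp
      ultimately show ?thesis
        using insert_Diff[OF e0] by metis
    qed simp
  qed
qed

lemma capacitated_assignment:
  fixes A :: "'e \<Rightarrow> 'i set" and c :: "'i \<Rightarrow> nat"
  assumes "finite D" "\<forall>e\<in>D. finite (A e)"
    and "\<forall>S\<subseteq>D. card S \<le> (\<Sum>i\<in>\<Union>(A ` S). c i)"
  shows "\<exists>f. (\<forall>e\<in>D. f e \<in> A e) \<and> (\<forall>i. card {e\<in>D. f e = i} \<le> c i)"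
proof -
  define B where "B e = Sigma (A e) (\<lambda>i. {..<c i})" for e
  have finB: "\<forall>e\<in>D. finite (B e)"
    using assms(2) unfolding B_def by simp
  have "Hall_condition B D"
    unfolding Hall_condition_def
  proof (intro allI impI)
    fix S assume S: "S \<subseteq> D"
    have "finite (\<Union>(A ` S))"
      using S assms(1,2) by (auto intro: finite_subset)
    moreover have "\<Union>(B ` S) = Sigma (\<Union>(A ` S)) (\<lambda>i. {..<c i})"
      unfolding B_def by auto
    ultimately show "card S \<le> card (\<Union>(B ` S))"
      using assms(3) S by simp
  qed
  then obtain r where r: "\<forall>e\<in>D. r e \<in> B e" "inj_on r D"
    using Hall_marriage[OF assms(1) finB] by auto
  have "card {e\<in>D. fst (r e) = i} \<le> c i" for i
  proof -
    have "inj_on r {e\<in>D. fst (r e) = i}"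
      using r(2) by (rule inj_on_subset) blast
    then have "card {e\<in>D. fst (r e) = i} = card (r ` {e\<in>D. fst (r e) = i})"
      by (simp add: card_image)
    also have "\<dots> \<le> card ({i} \<times> {..<c i})"
    proof (rule card_mono)
      show "r ` {e\<in>D. fst (r e) = i} \<subseteq> {i} \<times> {..<c i}"
        using r(1) unfolding B_def by (auto simp: mem_Times_iff)
    qed simp
    finally show ?thesis by simp
  qed
  moreover have "\<forall>e\<in>D. fst (r e) \<in> A e"
    using r(1) unfolding B_def by force
  ultimately show ?thesis
    by (intro exI[of _ "\<lambda>e. fst (r e)"] conjI allI) simp_all
qed

lemma card_filter_eq_sum_if:
  "finite X \<Longrightarrow> card {x\<in>X. P x} = (\<Sum>x\<in>X. if P x then 1 else 0)"
  by (simp add: sum.If_cases Int_def)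

lemma sum_card_incidences:
  assumes "finite S" "finite L"
  shows "(\<Sum>a\<in>S. card {l\<in>L. a \<in> N l}) = (\<Sum>l\<in>L. card {a\<in>S. a \<in> N l})"
proof -
  have "(\<Sum>a\<in>S. card {l\<in>L. a \<in> N l}) = (\<Sum>a\<in>S. \<Sum>l\<in>L. if a \<in> N l then 1 else 0)"
    using assms(2) by (simp add: card_filter_eq_sum_if)
  also have "\<dots> = (\<Sum>l\<in>L. \<Sum>a\<in>S. if a \<in> N l then 1 else 0)"
    by (rule sum.swap)
  also have "\<dots> = (\<Sum>l\<in>L. card {a\<in>S. a \<in> N l})"
    using assms(1) by (simp add: card_filter_eq_sum_if)
  finally show ?thesis .
qed

lemma card_le_sum_capacities:
  assumes "finite I" "\<forall>l\<in>I. finite (N l) \<and> 3 \<le> card (N l)"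
    and "finite S" "\<forall>a\<in>S. 3 \<le> card {l\<in>I. a \<in> N l}"
  shows "card S \<le> (\<Sum>l\<in>(\<Union>a\<in>S. {l\<in>I. a \<in> N l}). card (N l) - 2)"
proof -
  define L where "L = (\<Union>a\<in>S. {l\<in>I. a \<in> N l})"
  have L: "L \<subseteq> I" "finite L"
    using assms(1) unfolding L_def by (auto intro: finite_subset)
  have "3 * card S = (\<Sum>a\<in>S. 3)" by simp
  also have "\<dots> \<le> (\<Sum>a\<in>S. card {l\<in>I. a \<in> N l})"
    using assms(4) by (intro sum_mono) blast
  also have "\<dots> = (\<Sum>a\<in>S. card {l\<in>L. a \<in> N l})"
    unfolding L_def by (intro sum.cong refl arg_cong[where f = card]) blast
  also have "\<dots> = (\<Sum>l\<in>L. card {a\<in>S. a \<in> N l})"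
    using assms(3) L(2) by (rule sum_card_incidences)
  also have "\<dots> \<le> (\<Sum>l\<in>L. 3 * (card (N l) - 2))"
  proof (rule sum_mono)
    fix l assume "l \<in> L"
    then have "finite (N l)" "3 \<le> card (N l)"
      using assms(2) L(1) by auto
    moreover have "card {a\<in>S. a \<in> N l} \<le> card (N l)"
      using calculation(1) by (intro card_mono) auto
    ultimately show "card {a\<in>S. a \<in> N l} \<le> 3 * (card (N l) - 2)" by linarith
  qed
  finally show ?thesis
    unfolding L_def by (simp add: sum_distrib_left[symmetric])
qed

definition shared_part :: "('i \<Rightarrow> 'a set) \<Rightarrow> 'i set \<Rightarrow> 'i \<Rightarrow> 'a set" where
  "shared_part X I l = X l \<inter> (\<Union>l'\<in>I - {l}. X l')"

lemma two_le_card_shared_occurrences: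
  assumes "finite I" "l \<in> I" "a \<in> shared_part X I l"
  shows "2 \<le> card {l\<in>I. a \<in> shared_part X I l}"
proof -
  obtain l' where l': "l' \<in> I" "l' \<noteq> l" "a \<in> X l'"
    using assms(3) unfolding shared_part_def by blast
  then have "{l, l'} \<subseteq> {l\<in>I. a \<in> shared_part X I l}"
    using assms(2,3) unfolding shared_part_def by blast
  then have "card {l, l'} \<le> card {l\<in>I. a \<in> shared_part X I l}"
    using assms(1) by (intro card_mono) auto
  then show ?thesis
    using l'(2) by simp
qed

theorem exists_even_subfamily:
  assumes "finite I" "\<forall>l\<in>I. finite (X l)" "\<forall>l\<in>I. 3 \<le> card (shared_part X I l)"
  shows "\<exists>Y. (\<forall>l\<in>I. Y l \<subseteq> X l \<and> 2 \<le> card (Y l)) \<and> (\<forall>a. even (card {l\<in>I. a \<in> Y l}))"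
proof -
  define N where "N = shared_part X I"
  define occ where "occ a = {l\<in>I. a \<in> N l}" for a
  define D where "D = {a \<in> (\<Union>l\<in>I. N l). odd (card (occ a))}"
  have N: "\<forall>l\<in>I. finite (N l) \<and> 3 \<le> card (N l)"
    using assms(2,3) unfolding N_def shared_part_def by auto
  have finite_D: "finite D"
    using assms(1) N unfolding D_def by auto
  have D_occ: "\<forall>a\<in>D. 3 \<le> card (occ a)"
  proof
    fix a assume "a \<in> D"
    then have "odd (card (occ a))" "2 \<le> card (occ a)"
      using two_le_card_shared_occurrences[OF assms(1)] unfolding D_def occ_def N_def by auto
    then show "3 \<le> card (occ a)" by presburger
  qed
  have capacities: "\<forall>S\<subseteq>D. card S \<le> (\<Sum>l\<in>\<Union>(occ ` S). card (N l) - 2)"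
  proof (intro allI impI)
    fix S assume "S \<subseteq> D"
    then have "finite S" "\<forall>a\<in>S. 3 \<le> card {l\<in>I. a \<in> N l}"
      using finite_D D_occ unfolding occ_def by (auto intro: finite_subset)
    then show "card S \<le> (\<Sum>l\<in>\<Union>(occ ` S). card (N l) - 2)"
      unfolding occ_def by (rule card_le_sum_capacities[OF assms(1) N])
  qed
  have "\<forall>a\<in>D. finite (occ a)"
    using assms(1) unfolding occ_def by simp
  then obtain f where f: "\<forall>a\<in>D. f a \<in> occ a" "\<forall>l. card {a\<in>D. f a = l} \<le> card (N l) - 2"
    using capacitated_assignment[OF finite_D _ capacities] by auto
  define Y where "Y l = N l - {a\<in>D. f a = l}" for l
  have "Y l \<subseteq> X l \<and> 2 \<le> card (Y l)" if "l \<in> I" for l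
  proof
    show "Y l \<subseteq> X l"
      unfolding Y_def N_def shared_part_def by blast
    have "card (N l) - card {a\<in>D. f a = l} \<le> card (Y l)"
      unfolding Y_def using finite_D by (intro diff_card_le_card_Diff) auto
    moreover have "card {a\<in>D. f a = l} \<le> card (N l) - 2" "3 \<le> card (N l)"
      using f(2) N that by auto
    ultimately show "2 \<le> card (Y l)" by linarith
  qed
  moreover have "even (card {l\<in>I. a \<in> Y l})" for a
  proof (cases "a \<in> D")
    case True
    then have "{l\<in>I. a \<in> Y l} = occ a - {f a}" "f a \<in> occ a" "odd (card (occ a))"
      using f(1) unfolding Y_def occ_def D_def by auto
    moreover have "finite (occ a)"
      using assms(1) unfolding occ_def by simp
    ultimately show ?thesis
      by (simp add: card_Diff_singleton)
  next
    case False
    then have "occ a \<noteq> {} \<Longrightarrow> even (card (occ a))"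
      unfolding occ_def D_def by auto
    then have "even (card (occ a))"
      by (cases "occ a = {}") simp_all
    moreover have "{l\<in>I. a \<in> Y l} = occ a"
      using False unfolding Y_def occ_def by auto
    ultimately show ?thesis by simp
  qed
  ultimately show ?thesis by blast
qed

lemma card_Diff_shared_part:
  assumes "finite (X l)"
  shows "card (X l - (\<Union>l'\<in>I - {l}. X l')) = card (X l) - card (shared_part X I l)"
proof -
  have "X l - (\<Union>l'\<in>I - {l}. X l') = X l - shared_part X I l"
    unfolding shared_part_def by blast
  then show ?thesis
    using assms by (simp add: card_Diff_subset shared_part_def)
qed

lemma interval_avoiding_point:
  fixes a b l p :: nat
  assumes "l \<in> {a..b}" "1 \<le> p" "2 * p \<le> b - a + 1"
  obtains c d where "c \<le> d" "p \<le> d - c + 1" "{c..d} \<subseteq> {a..b} - {l}"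
proof (cases "b - l \<le> l - a")
  case True
  then have "a \<le> l - 1" "p \<le> (l - 1) - a + 1" "{a..l - 1} \<subseteq> {a..b} - {l}"
    using assms by auto
  then show ?thesis using that by blast
next
  case False
  then have "l + 1 \<le> b" "p \<le> b - (l + 1) + 1" "{l + 1..b} \<subseteq> {a..b} - {l}"
    using assms by auto
  then show ?thesis using that by blast
qed

lemma card_UN_interval_ge:
  fixes X :: "nat \<Rightarrow> 'a set"
  assumes X: "\<forall>l\<in>{lo..hi}. finite (X l) \<and> k \<le> card (X l)"
    and sparse: "\<And>a b. lo \<le> a \<Longrightarrow> a < b \<Longrightarrow> b \<le> hi \<Longrightarrow> \<exists>l\<in>{a..b}. card (shared_part X {a..b} l) < 3"
  shows "lo \<le> a \<Longrightarrow> a \<le> b \<Longrightarrow> b \<le> hi \<Longrightarrow> 2 ^ t \<le> b - a + 1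
    \<Longrightarrow> (k - 2) * t \<le> card (\<Union>l\<in>{a..b}. X l)"
proof (induction t arbitrary: a b)
  case (Suc t)
  have "2 \<le> (2::nat) ^ Suc t"
    by simp
  then have "a < b"
    using Suc.prems(2,4) by linarith
  then obtain l where l: "l \<in> {a..b}" "card (shared_part X {a..b} l) < 3"
    using sparse Suc.prems by blast
  define P where "P = X l - (\<Union>l'\<in>{a..b} - {l}. X l')"
  have "finite (X l)" "k \<le> card (X l)"
    using X l(1) Suc.prems by auto
  then have card_P: "k - 2 \<le> card P"
    using l(2) card_Diff_shared_part unfolding P_def by fastforce
  obtain c d where cd: "c \<le> d" "2 ^ t \<le> d - c + 1" "{c..d} \<subseteq> {a..b} - {l}"
    using interval_avoiding_point[OF l(1), of "2 ^ t"] Suc.prems(4) by auto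
  then have "lo \<le> c" "d \<le> hi"
    using Suc.prems by auto
  with cd have IH: "(k - 2) * t \<le> card (\<Union>l\<in>{c..d}. X l)"
    using Suc.IH by blast
  have fin: "finite (\<Union>l\<in>{a..b}. X l)"
    using X Suc.prems by auto
  have "(\<Union>l\<in>{c..d}. X l) \<inter> P = {}" "(\<Union>l\<in>{c..d}. X l) \<union> P \<subseteq> (\<Union>l\<in>{a..b}. X l)"
    using cd(3) l(1) unfolding P_def by blast+
  then have "card (\<Union>l\<in>{c..d}. X l) + card P \<le> card (\<Union>l\<in>{a..b}. X l)"
    using fin by (metis card_Un_disjoint card_mono finite_Un rev_finite_subset)
  then show ?case
    using IH card_P by simp
qed simp

lemma log2_third_less:
  fixes n t :: nat
  assumes "0 < n" "n < 2 ^ (t + 1)"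
  shows "log 2 (real n / 3) < t"
proof -
  have "real n < 2 * 2 ^ t"
    using assms(2) by (metis of_nat_less_iff of_nat_numeral of_nat_power power_Suc Suc_eq_plus1)
  then have "real n / 3 < 2 ^ t"
    by simp
  then have "log 2 (real n / 3) < log 2 (2 ^ t)"
    using assms(1) by (subst log_less_cancel_iff) auto
  then show ?thesis by simp
qed

theorem lemma3:
  fixes \<Sigma> :: "'a set" and k n :: nat and X :: "nat \<Rightarrow> 'a set"
  assumes "finite \<Sigma>" and "k > 2" and "n \<ge> 1"
    and "\<And>l. l \<in> {1..n} \<Longrightarrow> X l \<subseteq> \<Sigma> \<and> card (X l) = k"
    and "real (card \<Sigma>) < (real k - 2) * log 2 (real n / 3)"
  shows "\<exists>i j Y. 1 \<le> i \<and> i < j \<and> j \<le> n \<and>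
           (\<forall>l\<in>{i..j}. Y l \<subseteq> X l \<and> card (Y l) \<ge> 2) \<and>
           (\<forall>a\<in>\<Sigma>. even (card {l\<in>{i..j}. a \<in> Y l}))"
proof (rule ccontr)
  assume no_even: "\<not> ?thesis"
  have X: "\<forall>l\<in>{1..n}. finite (X l) \<and> k \<le> card (X l)"
    using assms(1,4) finite_subset by fastforce
  have sparse: "\<exists>l\<in>{i..j}. card (shared_part X {i..j} l) < 3"
    if ij: "1 \<le> i" "i < j" "j \<le> n" for i j
  proof (rule ccontr)
    assume "\<not> ?thesis"
    moreover have "\<forall>l\<in>{i..j}. finite (X l)"
      using X ij by auto
    ultimately obtain Y where "\<forall>l\<in>{i..j}. Y l \<subseteq> X l \<and> 2 \<le> card (Y l)"
      "\<forall>a. even (card {l\<in>{i..j}. a \<in> Y l})"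
      using exists_even_subfamily[of "{i..j}" X] by force
    then show False
      using no_even ij by blast
  qed
  obtain t where t: "2 ^ t \<le> n" "n < 2 ^ (t + 1)"
    using ex_power_ivl1[of 2 n] assms(3) by auto
  have "(k - 2) * t \<le> card (\<Union>l\<in>{1..n}. X l)"
    using card_UN_interval_ge[OF X sparse] t(1) assms(3) by simp
  also have "\<dots> \<le> card \<Sigma>"
    using assms(1,4) by (intro card_mono) blast+
  finally have "(real k - 2) * t \<le> card \<Sigma>"
    using assms(2) by (metis of_nat_diff of_nat_le_iff of_nat_mult of_nat_numeral less_imp_le)
  moreover have "(real k - 2) * log 2 (real n / 3) < (real k - 2) * t"
    using log2_third_less[of n t] t(2) assms(2,3) by simp
  ultimately show False
    using assms(5) by linarith
qed

end
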